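(* Let $P$, $P'$ and $Q$ be transition matrices on the finite set $S$, all reversible with respect to $\pi$, with $P$ and $P'$ irreducible, and let $0<a<1$. Then $P'$ efficiency-dominates $P$ if and only if $aP'+(1-a)Q$ efficiency-dominates $aP+(1-a)Q$.
   Context: $S$ is a finite set, and $\pi$ is a probability distribution on $S$ with $\pi(x)>0$ for all $x$. A transition matrix $P$ is reversible with respect to $\pi$ if $\pi(x)P(x,y)=\pi(y)P(y,x)$ for all $x,y$; irreducible if every state can be reached from every other with positive probability in some number of steps. For a Markov chain $X_1,X_2,\dots$ with transition matrix $P$ and $X_1\sim\pi$, $v(f,P)=\lim_{N\to\infty}\frac1N\mathrm{Var}\big(\sum_{i=1}^N f(X_i)\big)$. $P$ efficiency-dominates $Q$ if $v(f,P)\le v(f,Q)$ for all $f:S\to\mathbb R$. *)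

theory Defs
  imports Complex_Main
begin

definition prob_dist :: "('a::finite \<Rightarrow> real) \<Rightarrow> bool" where
  "prob_dist \<pi> \<longleftrightarrow> (\<forall>x. \<pi> x > 0) \<and> (\<Sum>x\<in>UNIV. \<pi> x) = 1"

definition transition_matrix :: "('a::finite \<Rightarrow> 'a \<Rightarrow> real) \<Rightarrow> bool" where
  "transition_matrix P \<longleftrightarrow> (\<forall>x y. 0 \<le> P x y) \<and> (\<forall>x. (\<Sum>y\<in>UNIV. P x y) = 1)"

definition reversible :: "('a::finite \<Rightarrow> real) \<Rightarrow> ('a \<Rightarrow> 'a \<Rightarrow> real) \<Rightarrow> bool" where
  "reversible \<pi> P \<longleftrightarrow> (\<forall>x y. \<pi> x * P x y = \<pi> y * P y x)"

fun mat_pow :: "('a::finite \<Rightarrow> 'a \<Rightarrow> real) \<Rightarrow> nat \<Rightarrow> 'a \<Rightarrow> 'a \<Rightarrow> real" where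
  "mat_pow P 0 x y = (if x = y then 1 else 0)"
| "mat_pow P (Suc n) x y = (\<Sum>z\<in>UNIV. mat_pow P n x z * P z y)"

definition irreducible_chain :: "('a::finite \<Rightarrow> 'a \<Rightarrow> real) \<Rightarrow> bool" where
  "irreducible_chain P \<longleftrightarrow> (\<forall>x y. \<exists>n. mat_pow P n x y > 0)"

fun chain_weight :: "('a \<Rightarrow> 'a \<Rightarrow> real) \<Rightarrow> 'a \<Rightarrow> 'a list \<Rightarrow> real" where
  "chain_weight P x [] = 1"
| "chain_weight P x (y # ys) = P x y * chain_weight P y ys"

fun path_prob :: "('a \<Rightarrow> real) \<Rightarrow> ('a \<Rightarrow> 'a \<Rightarrow> real) \<Rightarrow> 'a list \<Rightarrow> real" where
  "path_prob \<pi> P [] = 1"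
| "path_prob \<pi> P (x # xs) = \<pi> x * chain_weight P x xs"

definition path_expect ::
  "('a::finite \<Rightarrow> real) \<Rightarrow> ('a \<Rightarrow> 'a \<Rightarrow> real) \<Rightarrow> nat \<Rightarrow> ('a list \<Rightarrow> real) \<Rightarrow> real" where
  "path_expect \<pi> P N g = (\<Sum>xs\<in>{xs. length xs = N}. path_prob \<pi> P xs * g xs)"

definition sum_variance ::
  "('a::finite \<Rightarrow> real) \<Rightarrow> ('a \<Rightarrow> 'a \<Rightarrow> real) \<Rightarrow> ('a \<Rightarrow> real) \<Rightarrow> nat \<Rightarrow> real" where
  "sum_variance \<pi> P f N =
     path_expect \<pi> P N (\<lambda>xs. (sum_list (map f xs))^2)
     - (path_expect \<pi> P N (\<lambda>xs. sum_list (map f xs)))^2"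

definition asym_var ::
  "('a::finite \<Rightarrow> real) \<Rightarrow> ('a \<Rightarrow> 'a \<Rightarrow> real) \<Rightarrow> ('a \<Rightarrow> real) \<Rightarrow> real" where
  "asym_var \<pi> P f = lim (\<lambda>N. sum_variance \<pi> P f N / real N)"

definition efficiency_dominates ::
  "('a::finite \<Rightarrow> real) \<Rightarrow> ('a \<Rightarrow> 'a \<Rightarrow> real) \<Rightarrow> ('a \<Rightarrow> 'a \<Rightarrow> real) \<Rightarrow> bool" where
  "efficiency_dominates \<pi> P Q \<longleftrightarrow> (\<forall>f. asym_var \<pi> P f \<le> asym_var \<pi> Q f)"

end

theory Submission
  imports Defs "HOL-Analysis.Analysis"
begin

text \<open>Let \<open>E\<^sub>P(h) = \<langle>h, h - P h\<rangle>\<^sub>\<pi>\<close> be the Dirichlet form of a \<open>\<pi>\<close>-reversible kernel \<open>P\<close>.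
  If \<open>g\<close> solves the Poisson equation \<open>g - P g = f - \<pi>(f)\<close>, the autocovariances of \<open>f\<close> along the
  stationary chain are second differences of \<open>k \<mapsto> \<langle>g, P\<^sup>k g\<rangle>\<^sub>\<pi>\<close>; the double sum telescopes and gives
  \<open>v(f, P) = 2 E\<^sub>P(g) - \<parallel>f - \<pi>(f)\<parallel>\<^sup>2\<close>. Moreover \<open>E\<^sub>P(g) = max\<^sub>h (2 \<langle>f - \<pi>(f), h\<rangle> - E\<^sub>P(h))\<close>, so
  \<open>P'\<close> efficiency-dominates \<open>P\<close> iff \<open>E\<^sub>P \<le> E\<^bsub>P'\<^esub>\<close> pointwise. The Dirichlet form is affine in the
  kernel, so mixing both kernels with the same \<open>Q\<close> at weight \<open>a > 0\<close> neither creates nor destroys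
  this ordering. Irreducibility, which survives the mixing in the form "zero Dirichlet form
  only for constants", is what makes the Poisson equation solvable.\<close>

lemma prob_dist_pos: "prob_dist \<pi> \<Longrightarrow> 0 < \<pi> x"
  by (simp add: prob_dist_def)

lemma prob_dist_nonneg: "prob_dist \<pi> \<Longrightarrow> 0 \<le> \<pi> x"
  by (simp add: prob_dist_def less_imp_le)

lemma sum_pi_centred:
  assumes "prob_dist \<pi>"
  shows "(\<Sum>x\<in>UNIV. \<pi> x * (f x - (\<Sum>x\<in>UNIV. \<pi> x * f x))) = 0"
  using assms by (simp add: prob_dist_def right_diff_distrib sum_subtractf sum_distrib_right[symmetric])

section \<open>Markov operator and Dirichlet form\<close>

definition markov_op :: "('a::finite \<Rightarrow> 'a \<Rightarrow> real) \<Rightarrow> ('a \<Rightarrow> real) \<Rightarrow> 'a \<Rightarrow> real" where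
  "markov_op P h x = (\<Sum>y\<in>UNIV. P x y * h y)"

definition pi_inner :: "('a::finite \<Rightarrow> real) \<Rightarrow> ('a \<Rightarrow> real) \<Rightarrow> ('a \<Rightarrow> real) \<Rightarrow> real" where
  "pi_inner \<pi> u w = (\<Sum>x\<in>UNIV. \<pi> x * u x * w x)"

definition dirichlet_form :: "('a::finite \<Rightarrow> real) \<Rightarrow> ('a \<Rightarrow> 'a \<Rightarrow> real) \<Rightarrow> ('a \<Rightarrow> real) \<Rightarrow> real" where
  "dirichlet_form \<pi> P h = pi_inner \<pi> h (\<lambda>x. h x - markov_op P h x)"

lemma markov_op_add: "markov_op P (\<lambda>x. u x + w x) = (\<lambda>x. markov_op P u x + markov_op P w x)"
  by (simp add: markov_op_def fun_eq_iff distrib_left sum.distrib)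

lemma markov_op_diff: "markov_op P (\<lambda>x. u x - w x) = (\<lambda>x. markov_op P u x - markov_op P w x)"
  by (simp add: markov_op_def fun_eq_iff right_diff_distrib sum_subtractf)

lemma markov_op_const:
  assumes "transition_matrix P"
  shows "markov_op P (\<lambda>_. c) = (\<lambda>_. c)"
  using assms by (simp add: markov_op_def fun_eq_iff transition_matrix_def sum_distrib_right[symmetric])

lemma markov_op_pow_diff:
  "(markov_op P ^^ k) (\<lambda>x. u x - w x) = (\<lambda>x. (markov_op P ^^ k) u x - (markov_op P ^^ k) w x)"
  by (induction k) (simp_all add: markov_op_diff)

lemma markov_op_pow_add_const:
  assumes "transition_matrix P"
  shows "(markov_op P ^^ k) (\<lambda>x. u x + c) = (\<lambda>x. (markov_op P ^^ k) u x + c)"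
  by (induction k) (simp_all add: markov_op_add markov_op_const[OF assms])

lemma markov_op_pow_Suc_apply:
  "(markov_op P ^^ Suc k) h x = (\<Sum>y\<in>UNIV. P x y * (markov_op P ^^ k) h y)"
  by (simp add: markov_op_def)

lemma abs_markov_op_le:
  assumes "transition_matrix P" "\<And>y. \<bar>h y\<bar> \<le> B"
  shows "\<bar>markov_op P h x\<bar> \<le> B"
proof -
  have "\<bar>markov_op P h x\<bar> \<le> (\<Sum>y\<in>UNIV. P x y * B)"
    unfolding markov_op_def using assms(1)
    by (intro order.trans[OF sum_abs] sum_mono)
       (simp add: abs_mult transition_matrix_def assms(2) mult_left_mono)
  also have "\<dots> = B"
    using assms(1) by (simp add: transition_matrix_def sum_distrib_right[symmetric])
  finally show ?thesis .
qed

lemma abs_markov_op_pow_le: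
  assumes "transition_matrix P" "\<And>y. \<bar>h y\<bar> \<le> B"
  shows "\<bar>(markov_op P ^^ k) h x\<bar> \<le> B"
  using assms(2) by (induction k arbitrary: x) (simp_all add: abs_markov_op_le[OF assms(1)])

lemma sum_pi_markov_op:
  assumes "transition_matrix P" "reversible \<pi> P"
  shows "(\<Sum>x\<in>UNIV. \<pi> x * markov_op P h x) = (\<Sum>x\<in>UNIV. \<pi> x * h x)"
proof -
  have "(\<Sum>x\<in>UNIV. \<pi> x * markov_op P h x) = (\<Sum>x\<in>UNIV. \<Sum>y\<in>UNIV. \<pi> y * P y x * h y)"
    using assms(2) by (simp add: markov_op_def reversible_def sum_distrib_left mult.assoc)
  also have "\<dots> = (\<Sum>y\<in>UNIV. \<pi> y * h y * (\<Sum>x\<in>UNIV. P y x))"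
    by (subst sum.swap) (simp add: sum_distrib_left mult_ac)
  also have "\<dots> = (\<Sum>x\<in>UNIV. \<pi> x * h x)"
    using assms(1) by (simp add: transition_matrix_def)
  finally show ?thesis .
qed

lemma sum_pi_markov_op_pow:
  assumes "transition_matrix P" "reversible \<pi> P"
  shows "(\<Sum>x\<in>UNIV. \<pi> x * (markov_op P ^^ k) h x) = (\<Sum>x\<in>UNIV. \<pi> x * h x)"
  by (induction k) (simp_all add: sum_pi_markov_op[OF assms])

lemma pi_inner_commute: "pi_inner \<pi> u w = pi_inner \<pi> w u"
  by (simp add: pi_inner_def mult_ac)

lemma pi_inner_diff_left: "pi_inner \<pi> (\<lambda>x. u x - v x) w = pi_inner \<pi> u w - pi_inner \<pi> v w"
  by (simp add: pi_inner_def algebra_simps sum_subtractf)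

lemma pi_inner_diff_right: "pi_inner \<pi> w (\<lambda>x. u x - v x) = pi_inner \<pi> w u - pi_inner \<pi> w v"
  by (simp add: pi_inner_def algebra_simps sum_subtractf)

lemma pi_inner_markov_op:
  assumes "reversible \<pi> P"
  shows "pi_inner \<pi> u (markov_op P w) = pi_inner \<pi> (markov_op P u) w"
proof -
  have "pi_inner \<pi> u (markov_op P w) = (\<Sum>x\<in>UNIV. \<Sum>y\<in>UNIV. (\<pi> y * P y x) * u x * w y)"
    using assms by (simp add: pi_inner_def markov_op_def reversible_def sum_distrib_left mult_ac)
  also have "\<dots> = pi_inner \<pi> (markov_op P u) w"
    by (subst sum.swap) (simp add: pi_inner_def markov_op_def sum_distrib_left sum_distrib_right mult_ac)
  finally show ?thesis .
qed

lemma dirichlet_form_edge_sum: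
  assumes "transition_matrix P" "reversible \<pi> P"
  shows "2 * dirichlet_form \<pi> P h = (\<Sum>x\<in>UNIV. \<Sum>y\<in>UNIV. \<pi> x * P x y * (h x - h y)\<^sup>2)"
proof -
  have from_x: "(\<Sum>x\<in>UNIV. \<Sum>y\<in>UNIV. \<pi> x * P x y * (h x)\<^sup>2) = (\<Sum>x\<in>UNIV. \<pi> x * (h x)\<^sup>2)"
    using assms(1) unfolding transition_matrix_def
    by (simp add: sum_distrib_right[symmetric] sum_distrib_left[symmetric] mult_ac)
  have from_y: "(\<Sum>x\<in>UNIV. \<Sum>y\<in>UNIV. \<pi> x * P x y * (h y)\<^sup>2) = (\<Sum>x\<in>UNIV. \<pi> x * (h x)\<^sup>2)"
    using sum_pi_markov_op[OF assms, of "\<lambda>y. (h y)\<^sup>2"]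
    by (simp add: markov_op_def sum_distrib_left mult_ac)
  have cross: "(\<Sum>x\<in>UNIV. \<Sum>y\<in>UNIV. \<pi> x * P x y * (h x * h y)) = pi_inner \<pi> h (markov_op P h)"
    by (simp add: pi_inner_def markov_op_def sum_distrib_left mult_ac)
  have "(\<Sum>x\<in>UNIV. \<Sum>y\<in>UNIV. \<pi> x * P x y * (h x - h y)\<^sup>2) =
     (\<Sum>x\<in>UNIV. \<Sum>y\<in>UNIV. \<pi> x * P x y * (h x)\<^sup>2) + (\<Sum>x\<in>UNIV. \<Sum>y\<in>UNIV. \<pi> x * P x y * (h y)\<^sup>2)
     - 2 * (\<Sum>x\<in>UNIV. \<Sum>y\<in>UNIV. \<pi> x * P x y * (h x * h y))"
    by (simp add: power2_diff algebra_simps sum.distrib sum_subtractf sum_distrib_left)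
  also have "\<dots> = 2 * dirichlet_form \<pi> P h"
    unfolding from_x from_y cross
    by (simp add: dirichlet_form_def pi_inner_def right_diff_distrib sum_subtractf power2_eq_square mult_ac)
  finally show ?thesis ..
qed

lemma dirichlet_form_nonneg:
  assumes "transition_matrix P" "reversible \<pi> P" "\<And>x. 0 \<le> \<pi> x"
  shows "0 \<le> dirichlet_form \<pi> P h"
proof -
  have "0 \<le> (\<Sum>x\<in>UNIV. \<Sum>y\<in>UNIV. \<pi> x * P x y * (h x - h y)\<^sup>2)"
    using assms(1,3) unfolding transition_matrix_def by (intro sum_nonneg) simp
  then show ?thesis using dirichlet_form_edge_sum[OF assms(1,2), of h] by simp
qed

lemma dirichlet_form_eq_0_imp_edge_eq:
  assumes "transition_matrix P" "reversible \<pi> P" "\<And>x. 0 < \<pi> x"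
    and "dirichlet_form \<pi> P h = 0" "P x y \<noteq> 0"
  shows "h x = h y"
proof -
  have nonneg: "0 \<le> \<pi> x * P x y * (h x - h y)\<^sup>2" for x y
    using assms(1) assms(3)[of x] unfolding transition_matrix_def by simp
  have "(\<Sum>x\<in>UNIV. \<Sum>y\<in>UNIV. \<pi> x * P x y * (h x - h y)\<^sup>2) = 0"
    using dirichlet_form_edge_sum[OF assms(1,2), of h] assms(4) by simp
  then have "\<forall>x\<in>UNIV. (\<Sum>y\<in>UNIV. \<pi> x * P x y * (h x - h y)\<^sup>2) = 0"
    by (subst (asm) sum_nonneg_eq_0_iff) (auto intro: sum_nonneg nonneg)
  then have "\<pi> x * P x y * (h x - h y)\<^sup>2 = 0"
    using sum_nonneg_eq_0_iff[of UNIV "\<lambda>y. \<pi> x * P x y * (h x - h y)\<^sup>2"] nonneg by auto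
  then show ?thesis using assms(3)[of x] assms(5) by simp
qed

lemma dirichlet_form_diff:
  assumes "reversible \<pi> P"
  shows "dirichlet_form \<pi> P (\<lambda>x. g x - h x) =
    dirichlet_form \<pi> P g - 2 * pi_inner \<pi> (\<lambda>x. g x - markov_op P g x) h + dirichlet_form \<pi> P h"
  using pi_inner_markov_op[OF assms, of g h] pi_inner_commute[of \<pi> h g]
    pi_inner_commute[of \<pi> h "markov_op P g"]
  unfolding dirichlet_form_def markov_op_diff pi_inner_diff_left pi_inner_diff_right
  by simp

text \<open>Equality holds at \<open>h = g\<close>, so \<open>dirichlet_form \<pi> P g\<close> is the maximum of the left-hand
  side over \<open>h\<close>.\<close>

lemma dirichlet_form_variational:
  assumes "transition_matrix P" "reversible \<pi> P" "\<And>x. 0 \<le> \<pi> x"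
  shows "2 * pi_inner \<pi> (\<lambda>x. g x - markov_op P g x) h - dirichlet_form \<pi> P h \<le> dirichlet_form \<pi> P g"
  using dirichlet_form_nonneg[OF assms, of "\<lambda>x. g x - h x"] dirichlet_form_diff[OF assms(2), of g h]
  by simp

definition dirichlet_nondegenerate :: "('a::finite \<Rightarrow> real) \<Rightarrow> ('a \<Rightarrow> 'a \<Rightarrow> real) \<Rightarrow> bool" where
  "dirichlet_nondegenerate \<pi> P \<longleftrightarrow> (\<forall>h. dirichlet_form \<pi> P h = 0 \<longrightarrow> (\<forall>x y. h x = h y))"

lemma irreducible_imp_dirichlet_nondegenerate:
  assumes "transition_matrix P" "reversible \<pi> P" "\<And>x. 0 < \<pi> x" "irreducible_chain P"
  shows "dirichlet_nondegenerate \<pi> P"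
  unfolding dirichlet_nondegenerate_def
proof (intro allI impI)
  fix h x y assume zero: "dirichlet_form \<pi> P h = 0"
  have "h x = h y" if "mat_pow P n x y \<noteq> 0" for n y
    using that
  proof (induction n arbitrary: y)
    case 0 then show ?case by (simp split: if_splits)
  next
    case (Suc n)
    then obtain z where "mat_pow P n x z * P z y \<noteq> 0"
      by (metis (no_types, lifting) mat_pow.simps(2) sum.neutral)
    then have "mat_pow P n x z \<noteq> 0" "P z y \<noteq> 0" by simp_all
    then show ?case
      using Suc.IH dirichlet_form_eq_0_imp_edge_eq[OF assms(1-3) zero] by metis
  qed
  moreover obtain n where "mat_pow P n x y > 0"
    using assms(4) unfolding irreducible_chain_def by blast
  ultimately show "h x = h y" by (metis less_irrefl)
qed

lemma transition_matrix_mixture: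
  assumes "transition_matrix P" "transition_matrix Q" "0 \<le> a" "a \<le> 1"
  shows "transition_matrix (\<lambda>x y. a * P x y + (1 - a) * Q x y)"
  using assms unfolding transition_matrix_def
  by (simp add: sum.distrib sum_distrib_left[symmetric])

lemma reversible_mixture:
  assumes "reversible \<pi> P" "reversible \<pi> Q"
  shows "reversible \<pi> (\<lambda>x y. a * P x y + (1 - a) * Q x y)"
  using assms unfolding reversible_def by (simp add: algebra_simps)

lemma dirichlet_form_mixture:
  "dirichlet_form \<pi> (\<lambda>x y. a * P x y + (1 - a) * Q x y) h =
     a * dirichlet_form \<pi> P h + (1 - a) * dirichlet_form \<pi> Q h"
proof -
  have "markov_op (\<lambda>x y. a * P x y + (1 - a) * Q x y) h =
      (\<lambda>x. a * markov_op P h x + (1 - a) * markov_op Q h x)"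
    by (simp add: fun_eq_iff markov_op_def distrib_right sum.distrib sum_distrib_left mult.assoc)
  then show ?thesis
    by (simp add: dirichlet_form_def pi_inner_def algebra_simps sum.distrib sum_distrib_left sum_subtractf)
qed

lemma dirichlet_nondegenerate_mixture:
  assumes "transition_matrix P" "reversible \<pi> P" "transition_matrix Q" "reversible \<pi> Q"
    and "\<And>x. 0 \<le> \<pi> x" "dirichlet_nondegenerate \<pi> P" "0 < a" "a \<le> 1"
  shows "dirichlet_nondegenerate \<pi> (\<lambda>x y. a * P x y + (1 - a) * Q x y)"
  unfolding dirichlet_nondegenerate_def
proof (intro allI impI)
  fix h x y assume "dirichlet_form \<pi> (\<lambda>x y. a * P x y + (1 - a) * Q x y) h = 0"
  then have sum_zero: "a * dirichlet_form \<pi> P h + (1 - a) * dirichlet_form \<pi> Q h = 0"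
    by (simp add: dirichlet_form_mixture)
  have "0 \<le> a * dirichlet_form \<pi> P h" "0 \<le> (1 - a) * dirichlet_form \<pi> Q h"
    using dirichlet_form_nonneg[OF assms(1,2,5)] dirichlet_form_nonneg[OF assms(3,4,5)] assms(7,8)
    by simp_all
  then have "a * dirichlet_form \<pi> P h = 0"
    using sum_zero by linarith
  then have "dirichlet_form \<pi> P h = 0"
    using assms(7) by simp
  then show "h x = h y" using assms(6) unfolding dirichlet_nondegenerate_def by blast
qed

section \<open>The Poisson equation\<close>

text \<open>The map \<open>g \<mapsto> g - P g + \<pi>(g)\<close> on \<open>real^'a\<close> preserves the mean \<open>\<pi>(g)\<close>, so an element of
  its kernel has mean zero and zero Dirichlet form, hence vanishes. Being injective, the map is onto,
  and a preimage of \<open>f\<close> has mean \<open>\<pi>(f) = 0\<close>, so it solves \<open>g - P g = f\<close>.\<close>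

lemma poisson_equation_solvable:
  assumes "prob_dist \<pi>" "transition_matrix P" "reversible \<pi> P" "dirichlet_nondegenerate \<pi> P"
    and "(\<Sum>x\<in>UNIV. \<pi> x * f x) = 0"
  shows "\<exists>g. \<forall>x. g x - markov_op P g x = f x"
proof -
  define T :: "real^'a \<Rightarrow> real^'a" where
    "T v = (\<chi> x. v $ x - markov_op P (($) v) x + (\<Sum>z\<in>UNIV. \<pi> z * v $ z))" for v
  have total: "(\<Sum>x\<in>UNIV. \<pi> x) = 1" using assms(1) by (simp add: prob_dist_def)
  have mean_T: "(\<Sum>x\<in>UNIV. \<pi> x * T v $ x) = (\<Sum>x\<in>UNIV. \<pi> x * v $ x)" for v
  proof -
    have "(\<Sum>x\<in>UNIV. \<pi> x * T v $ x) = (\<Sum>x\<in>UNIV. \<pi> x * v $ x)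
        - (\<Sum>x\<in>UNIV. \<pi> x * markov_op P (($) v) x) + (\<Sum>x\<in>UNIV. \<pi> x) * (\<Sum>z\<in>UNIV. \<pi> z * v $ z)"
      by (simp add: T_def algebra_simps sum.distrib sum_subtractf sum_distrib_right)
    then show ?thesis using sum_pi_markov_op[OF assms(2,3)] total by simp
  qed
  have "linear T"
    by (rule linearI)
       (simp_all add: T_def vec_eq_iff markov_op_def algebra_simps sum.distrib sum_distrib_left)
  moreover have "inj T"
    unfolding linear_injective_0[OF \<open>linear T\<close>]
  proof (intro allI impI)
    fix v assume "T v = 0"
    then have mean_0: "(\<Sum>z\<in>UNIV. \<pi> z * v $ z) = 0"
      using mean_T[of v] by simp
    with \<open>T v = 0\<close> have "v $ x - markov_op P (($) v) x = 0" for x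
      by (simp add: T_def vec_eq_iff)
    then have "dirichlet_form \<pi> P (($) v) = 0"
      by (simp add: dirichlet_form_def pi_inner_def)
    then have const: "v $ x = v $ y" for x y
      using assms(4) unfolding dirichlet_nondegenerate_def by blast
    have "v $ x = 0" for x
    proof -
      have "(\<Sum>z\<in>UNIV. \<pi> z * v $ z) = (\<Sum>z\<in>UNIV. \<pi> z * v $ x)"
        using const by (intro sum.cong) auto
      also have "\<dots> = (\<Sum>z\<in>UNIV. \<pi> z) * v $ x"
        by (simp add: sum_distrib_right)
      finally have "(\<Sum>z\<in>UNIV. \<pi> z * v $ z) = (\<Sum>z\<in>UNIV. \<pi> z) * v $ x" .
      then show ?thesis using mean_0 total by simp
    qed
    then show "v = 0" by (simp add: vec_eq_iff)
  qed
  ultimately obtain v where v: "T v = (\<chi> x. f x)"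
    by (metis linear_injective_imp_surjective surjD)
  have "(\<Sum>z\<in>UNIV. \<pi> z * v $ z) = 0"
    using mean_T[of v] assms(5) by (simp add: v)
  then have "v $ x - markov_op P (($) v) x = f x" for x
    using v by (simp add: T_def vec_eq_iff)
  then show ?thesis by blast
qed

section \<open>Variance of additive functionals\<close>

definition chain_expect :: "('a::finite \<Rightarrow> 'a \<Rightarrow> real) \<Rightarrow> 'a \<Rightarrow> nat \<Rightarrow> ('a list \<Rightarrow> real) \<Rightarrow> real" where
  "chain_expect P x n F = (\<Sum>ys\<in>{ys. length ys = n}. chain_weight P x ys * F ys)"

lemma sum_lists_length_Suc:
  "(\<Sum>xs\<in>{xs::'a::finite list. length xs = Suc n}. G xs) =
   (\<Sum>y\<in>UNIV. \<Sum>ys\<in>{ys. length ys = n}. G (y # ys))"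
proof -
  have "{xs::'a list. length xs = Suc n} = (\<lambda>(y, ys). y # ys) ` (UNIV \<times> {ys. length ys = n})"
    by (auto simp: length_Suc_conv image_iff)
  moreover have "inj_on (\<lambda>(y, ys). y # ys) (UNIV \<times> {ys::'a list. length ys = n})"
    by (auto simp: inj_on_def)
  ultimately show ?thesis
    by (simp add: sum.reindex sum.cartesian_product finite_list_length case_prod_unfold)
qed

lemma chain_expect_0 [simp]: "chain_expect P x 0 F = F []"
  by (simp add: chain_expect_def)

lemma chain_expect_Suc:
  "chain_expect P x (Suc n) F = (\<Sum>y\<in>UNIV. P x y * chain_expect P y n (\<lambda>ys. F (y # ys)))"
  unfolding chain_expect_def sum_lists_length_Suc by (simp add: sum_distrib_left mult_ac)

lemma chain_expect_const:
  assumes "transition_matrix P"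
  shows "chain_expect P x n (\<lambda>_. c) = c"
proof (induction n arbitrary: x)
  case (Suc n)
  then show ?case
    using assms by (simp add: chain_expect_Suc transition_matrix_def sum_distrib_right[symmetric])
qed simp

lemma chain_expect_cong:
  assumes "\<And>ys. length ys = n \<Longrightarrow> F ys = G ys"
  shows "chain_expect P x n F = chain_expect P x n G"
  unfolding chain_expect_def using assms by (intro sum.cong) auto

lemma chain_expect_sum: "chain_expect P x n (\<lambda>ys. \<Sum>i\<in>I. F i ys) = (\<Sum>i\<in>I. chain_expect P x n (F i))"
  unfolding chain_expect_def by (simp add: sum_distrib_left sum.swap[of _ I])

lemma chain_expect_nth:
  assumes "transition_matrix P" "i < n"
  shows "chain_expect P x n (\<lambda>ys. u (ys ! i)) = (markov_op P ^^ Suc i) u x"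
  using assms(2)
proof (induction i arbitrary: x n)
  case 0
  then obtain m where "n = Suc m" by (cases n) auto
  then show ?case by (simp add: chain_expect_Suc chain_expect_const[OF assms(1)] markov_op_def)
next
  case (Suc i)
  then obtain m where "n = Suc m" "i < m" by (cases n) auto
  then show ?case
    using Suc.IH by (simp add: chain_expect_Suc markov_op_pow_Suc_apply[where k="Suc i"] del: funpow.simps(2))
qed

lemma chain_expect_nth_mult_nth:
  assumes "transition_matrix P" "i < j" "j < n"
  shows "chain_expect P x n (\<lambda>ys. u (ys ! i) * w (ys ! j)) =
    (markov_op P ^^ Suc i) (\<lambda>z. u z * (markov_op P ^^ (j - i)) w z) x"
  using assms(2,3)
proof (induction i arbitrary: x n j)
  case 0
  then obtain m j' where n: "n = Suc m" and j: "j = Suc j'" and "j' < m"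
    by (cases n; cases j) auto
  have "chain_expect P y m (\<lambda>ys. u y * w ((y # ys) ! j)) = u y * chain_expect P y m (\<lambda>ys. w (ys ! j'))" for y
    by (simp add: j chain_expect_def sum_distrib_left mult_ac)
  then have "chain_expect P y m (\<lambda>ys. u y * w ((y # ys) ! j)) = u y * (markov_op P ^^ j) w y" for y
    using chain_expect_nth[OF assms(1) \<open>j' < m\<close>] j by (simp del: funpow.simps(2))
  then show ?case
    by (simp add: n chain_expect_Suc markov_op_pow_Suc_apply[where k=0] mult_ac del: funpow.simps(2))
next
  case (Suc i)
  then obtain m j' where "n = Suc m" "j = Suc j'" "i < j'" "j' < m"
    by (cases n; cases j) auto
  then show ?case
    using Suc.IH by (simp add: chain_expect_Suc markov_op_pow_Suc_apply[where k="Suc i"] del: funpow.simps(2))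
qed

text \<open>By stationarity the path \<open>X\<^sub>1, \<dots>, X\<^sub>N\<close> may be preceded by one more step from \<open>\<pi>\<close>, so that
  all of its coordinates become transitions of the chain.\<close>

lemma path_expect_eq_chain_expect:
  assumes "prob_dist \<pi>" "transition_matrix P" "reversible \<pi> P"
  shows "path_expect \<pi> P N F = (\<Sum>z\<in>UNIV. \<pi> z * chain_expect P z N F)"
proof (cases N)
  case 0
  have "{xs::'a list. length xs = 0} = {[]}" by auto
  then show ?thesis
    using assms(1) by (simp add: 0 path_expect_def prob_dist_def sum_distrib_right[symmetric])
next
  case (Suc n)
  have "path_expect \<pi> P N F = (\<Sum>x\<in>UNIV. \<pi> x * chain_expect P x n (\<lambda>ys. F (x # ys)))"
    unfolding Suc path_expect_def sum_lists_length_Suc chain_expect_def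
    by (simp add: sum_distrib_left mult_ac)
  also have "\<dots> = (\<Sum>z\<in>UNIV. \<pi> z * markov_op P (\<lambda>x. chain_expect P x n (\<lambda>ys. F (x # ys))) z)"
    using sum_pi_markov_op[OF assms(2,3)] by metis
  also have "\<dots> = (\<Sum>z\<in>UNIV. \<pi> z * chain_expect P z N F)"
    unfolding Suc chain_expect_Suc markov_op_def ..
  finally show ?thesis .
qed

lemma stationary_mult_expect:
  assumes "prob_dist \<pi>" "transition_matrix P" "reversible \<pi> P" "i < N" "j < N"
  shows "(\<Sum>z\<in>UNIV. \<pi> z * chain_expect P z N (\<lambda>ys. f (ys ! i) * f (ys ! j))) =
    pi_inner \<pi> f ((markov_op P ^^ (i - j + (j - i))) f)"
proof -
  have ordered: "(\<Sum>z\<in>UNIV. \<pi> z * chain_expect P z N (\<lambda>ys. f (ys ! i) * f (ys ! j))) =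
      pi_inner \<pi> f ((markov_op P ^^ (j - i)) f)" if "i < j" "j < N" for i j
    using chain_expect_nth_mult_nth[OF assms(2) that] sum_pi_markov_op_pow[OF assms(2,3)]
    by (simp add: pi_inner_def mult_ac del: funpow.simps(2))
  consider "i < j" | "i = j" | "j < i" by arith
  then show ?thesis
  proof cases
    case 1
    then show ?thesis using ordered[OF 1 assms(5)] by simp
  next
    case 2
    then show ?thesis
      using chain_expect_nth[OF assms(2,4), of _ "\<lambda>z. f z * f z"] sum_pi_markov_op_pow[OF assms(2,3)]
      by (simp add: pi_inner_def mult_ac del: funpow.simps(2))
  next
    case 3
    then show ?thesis using ordered[OF 3 assms(4)] by (simp add: mult.commute)
  qed
qed

lemma sum_list_map_eq_sum_nth: "sum_list (map f ys) = (\<Sum>i<length ys. f (ys ! i))"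
  by (simp add: sum_list_sum_nth atLeast0LessThan)

lemma path_expect_sum_squared:
  assumes "prob_dist \<pi>" "transition_matrix P" "reversible \<pi> P"
  shows "path_expect \<pi> P N (\<lambda>xs. (sum_list (map f xs))\<^sup>2) =
    (\<Sum>i<N. \<Sum>j<N. pi_inner \<pi> f ((markov_op P ^^ (i - j + (j - i))) f))"
proof -
  have "path_expect \<pi> P N (\<lambda>xs. (sum_list (map f xs))\<^sup>2) =
        (\<Sum>z\<in>UNIV. \<pi> z * chain_expect P z N (\<lambda>ys. \<Sum>i<N. \<Sum>j<N. f (ys ! i) * f (ys ! j)))"
    unfolding path_expect_eq_chain_expect[OF assms]
    by (intro sum.cong refl arg_cong2[where f="(*)"] chain_expect_cong)
       (simp add: sum_list_map_eq_sum_nth power2_eq_square sum_product)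
  also have "\<dots> = (\<Sum>i<N. \<Sum>j<N. \<Sum>z\<in>UNIV. \<pi> z * chain_expect P z N (\<lambda>ys. f (ys ! i) * f (ys ! j)))"
    by (simp add: chain_expect_sum sum_distrib_left sum.swap[of _ UNIV])
  also have "\<dots> = (\<Sum>i<N. \<Sum>j<N. pi_inner \<pi> f ((markov_op P ^^ (i - j + (j - i))) f))"
    by (intro sum.cong refl stationary_mult_expect[OF assms]) auto
  finally show ?thesis .
qed

lemma path_expect_sum:
  assumes "prob_dist \<pi>" "transition_matrix P" "reversible \<pi> P"
  shows "path_expect \<pi> P N (\<lambda>xs. sum_list (map f xs)) = real N * (\<Sum>x\<in>UNIV. \<pi> x * f x)"
proof -
  have "path_expect \<pi> P N (\<lambda>xs. sum_list (map f xs)) =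
        (\<Sum>z\<in>UNIV. \<pi> z * chain_expect P z N (\<lambda>ys. \<Sum>i<N. f (ys ! i)))"
    unfolding path_expect_eq_chain_expect[OF assms]
    by (intro sum.cong refl arg_cong2[where f="(*)"] chain_expect_cong) (simp add: sum_list_map_eq_sum_nth)
  also have "\<dots> = (\<Sum>i<N. \<Sum>z\<in>UNIV. \<pi> z * chain_expect P z N (\<lambda>ys. f (ys ! i)))"
    by (simp add: chain_expect_sum sum_distrib_left sum.swap[of _ UNIV])
  also have "\<dots> = (\<Sum>i<N. \<Sum>x\<in>UNIV. \<pi> x * f x)"
    by (rule sum.cong[OF refl])
       (simp add: chain_expect_nth[OF assms(2)] sum_pi_markov_op_pow[OF assms(2,3)] del: funpow.simps(2))
  finally show ?thesis by simp
qed

lemma pi_inner_markov_op_pow_centred: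
  fixes f :: "'a::finite \<Rightarrow> real"
  assumes "prob_dist \<pi>" "transition_matrix P" "reversible \<pi> P"
  defines "\<mu> \<equiv> (\<Sum>x\<in>UNIV. \<pi> x * f x)"
  shows "pi_inner \<pi> f ((markov_op P ^^ k) f) =
    pi_inner \<pi> (\<lambda>x. f x - \<mu>) ((markov_op P ^^ k) (\<lambda>x. f x - \<mu>)) + \<mu>\<^sup>2"
proof -
  define f0 where "f0 = (\<lambda>x. f x - \<mu>)"
  have total: "(\<Sum>x\<in>UNIV. \<pi> x) = 1" using assms(1) by (simp add: prob_dist_def)
  have mean_f0: "(\<Sum>x\<in>UNIV. \<pi> x * f0 x) = 0"
    using total by (simp add: f0_def \<mu>_def right_diff_distrib sum_subtractf sum_distrib_right[symmetric])
  have pow: "(markov_op P ^^ k) f x = (markov_op P ^^ k) f0 x + \<mu>" for x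
    using markov_op_pow_add_const[OF assms(2), of k f0 \<mu>] by (simp add: f0_def)
  have "pi_inner \<pi> f ((markov_op P ^^ k) f) =
      (\<Sum>x\<in>UNIV. \<pi> x * (f0 x + \<mu>) * ((markov_op P ^^ k) f0 x + \<mu>))"
    by (simp add: pi_inner_def pow f0_def)
  also have "\<dots> = pi_inner \<pi> f0 ((markov_op P ^^ k) f0) + \<mu> * (\<Sum>x\<in>UNIV. \<pi> x * (markov_op P ^^ k) f0 x)
      + \<mu> * (\<Sum>x\<in>UNIV. \<pi> x * f0 x) + \<mu>\<^sup>2 * (\<Sum>x\<in>UNIV. \<pi> x)"
    by (simp add: pi_inner_def algebra_simps sum.distrib sum_distrib_left power2_eq_square)
  finally show ?thesis
    using mean_f0 total sum_pi_markov_op_pow[OF assms(2,3)] by (simp add: f0_def)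
qed

lemma sum_variance_eq_autocovariance_sum:
  fixes f :: "'a::finite \<Rightarrow> real"
  assumes "prob_dist \<pi>" "transition_matrix P" "reversible \<pi> P"
  defines "f0 \<equiv> (\<lambda>x. f x - (\<Sum>x\<in>UNIV. \<pi> x * f x))"
  shows "sum_variance \<pi> P f N = (\<Sum>i<N. \<Sum>j<N. pi_inner \<pi> f0 ((markov_op P ^^ (i - j + (j - i))) f0))"
  unfolding sum_variance_def path_expect_sum_squared[OF assms(1-3)] path_expect_sum[OF assms(1-3)]
    pi_inner_markov_op_pow_centred[OF assms(1-3), of f] f0_def
  by (simp add: sum.distrib power2_eq_square)

lemma sum_second_difference:
  fixes a :: "nat \<Rightarrow> real"
  shows "(\<Sum>k<N. a (Suc k) - 2 * a (k + 2) + a (k + 3)) = (a 1 - a 2) - (a (N + 1) - a (N + 2))"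
  by (induction N) (simp_all add: numeral_2_eq_2 numeral_3_eq_3)

lemma double_sum_second_difference:
  fixes a c :: "nat \<Rightarrow> real"
  assumes "\<And>k. c k = a k - 2 * a (k + 1) + a (k + 2)"
  shows "(\<Sum>i<N. \<Sum>j<N. c (i - j + (j - i))) = real N * (a 0 - a 2) - 2 * (a 1 - a (N + 1))"
proof (induction N)
  case (Suc N)
  have row: "(\<Sum>i<N. c (N - i)) = (a 1 - a 2) - (a (N + 1) - a (N + 2))"
  proof -
    have "(\<Sum>i<N. c (N - i)) = (\<Sum>i<N. c (Suc (N - Suc i)))"
      by (intro sum.cong) (auto simp: Suc_diff_Suc)
    also have "\<dots> = (\<Sum>k<N. c (Suc k))"
      by (rule sum.nat_diff_reindex)
    finally show ?thesis
      using sum_second_difference[of a N] by (simp add: assms add_ac numeral_3_eq_3)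
  qed
  have "(\<Sum>i<Suc N. \<Sum>j<Suc N. c (i - j + (j - i))) =
      (\<Sum>i<N. \<Sum>j<N. c (i - j + (j - i))) + 2 * (\<Sum>i<N. c (N - i)) + c 0"
    by (simp add: sum.distrib)
  then show ?case
    unfolding Suc row assms[of 0] by (simp add: algebra_simps numeral_2_eq_2)
qed simp

lemma sum_variance_poisson:
  assumes "prob_dist \<pi>" "transition_matrix P" "reversible \<pi> P"
    and poisson: "\<And>x. g x - markov_op P g x = f x - (\<Sum>x\<in>UNIV. \<pi> x * f x)"
  defines "a \<equiv> \<lambda>k. pi_inner \<pi> g ((markov_op P ^^ k) g)"
  shows "sum_variance \<pi> P f N = real N * (a 0 - a 2) - 2 * (a 1 - a (N + 1))"
proof -
  define f0 where "f0 = (\<lambda>x. g x - markov_op P g x)"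
  have pow_f0: "(markov_op P ^^ k) f0 = (\<lambda>x. (markov_op P ^^ k) g x - (markov_op P ^^ Suc k) g x)" for k
    by (simp add: f0_def markov_op_pow_diff funpow_Suc_right del: funpow.simps(2))
  have shift: "pi_inner \<pi> (markov_op P g) ((markov_op P ^^ k) g) = a (Suc k)" for k
    by (simp add: a_def pi_inner_markov_op[OF assms(3), symmetric])
  have autocov: "pi_inner \<pi> f0 ((markov_op P ^^ k) f0) = a k - 2 * a (k + 1) + a (k + 2)" for k
    unfolding pow_f0 pi_inner_diff_right unfolding f0_def pi_inner_diff_left shift
    by (simp add: a_def)
  have "f0 = (\<lambda>x. f x - (\<Sum>x\<in>UNIV. \<pi> x * f x))"
    using poisson by (simp add: f0_def)
  then have "sum_variance \<pi> P f N = (\<Sum>i<N. \<Sum>j<N. pi_inner \<pi> f0 ((markov_op P ^^ (i - j + (j - i))) f0))"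
    by (simp only: sum_variance_eq_autocovariance_sum[OF assms(1-3)])
  also have "\<dots> = real N * (a 0 - a 2) - 2 * (a 1 - a (N + 1))"
    by (rule double_sum_second_difference) (rule autocov)
  finally show ?thesis .
qed

lemma bounded_over_n_tendsto_0:
  fixes b :: "nat \<Rightarrow> real"
  assumes "\<And>n. \<bar>b n\<bar> \<le> K"
  shows "(\<lambda>n. b n / real n) \<longlonglongrightarrow> 0"
proof (rule Lim_null_comparison)
  show "\<forall>\<^sub>F n in sequentially. norm (b n / real n) \<le> K / real n"
    using assms by (intro always_eventually allI) (simp add: abs_divide divide_right_mono)
  show "(\<lambda>n. K / real n) \<longlonglongrightarrow> 0"
    by (rule lim_const_over_n)
qed

lemma asym_var_poisson:
  assumes "prob_dist \<pi>" "transition_matrix P" "reversible \<pi> P"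
    and poisson: "\<And>x. g x - markov_op P g x = f x - (\<Sum>x\<in>UNIV. \<pi> x * f x)"
  shows "asym_var \<pi> P f =
    2 * dirichlet_form \<pi> P g - pi_inner \<pi> (\<lambda>x. g x - markov_op P g x) (\<lambda>x. g x - markov_op P g x)"
proof -
  define a where "a k = pi_inner \<pi> g ((markov_op P ^^ k) g)" for k
  define B where "B = (\<Sum>x\<in>UNIV. \<bar>g x\<bar>)"
  have "\<bar>a k\<bar> \<le> (\<Sum>x\<in>UNIV. \<bar>\<pi> x * g x\<bar> * B)" for k
  proof -
    have "\<bar>g x\<bar> \<le> B" for x
      unfolding B_def by (rule member_le_sum) auto
    then have "\<bar>(markov_op P ^^ k) g x\<bar> \<le> B" for x
      by (rule abs_markov_op_pow_le[OF assms(2)])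
    then show ?thesis
      unfolding a_def pi_inner_def
      by (intro order.trans[OF sum_abs] sum_mono) (simp add: abs_mult mult_left_mono)
  qed
  then have "(\<lambda>N. 2 * (a 1 - a (N + 1)) / real N) \<longlonglongrightarrow> 0"
    by (intro bounded_over_n_tendsto_0[where K = "4 * (\<Sum>x\<in>UNIV. \<bar>\<pi> x * g x\<bar> * B)"])
       (smt (verit) abs_mult_pos)
  then have "(\<lambda>N. a 0 - a 2 - 2 * (a 1 - a (N + 1)) / real N) \<longlonglongrightarrow> a 0 - a 2"
    using tendsto_diff[OF tendsto_const] by fastforce
  moreover have "\<forall>\<^sub>F N in sequentially.
      a 0 - a 2 - 2 * (a 1 - a (N + 1)) / real N = sum_variance \<pi> P f N / real N"
    using eventually_gt_at_top[of 0]
    by eventually_elim (simp add: sum_variance_poisson[OF assms] a_def field_simps)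
  ultimately have "asym_var \<pi> P f = a 0 - a 2"
    unfolding asym_var_def by (blast intro: limI Lim_transform_eventually)
  moreover have "a 2 = pi_inner \<pi> (markov_op P g) (markov_op P g)"
    by (simp add: a_def numeral_2_eq_2 pi_inner_markov_op[OF assms(3), symmetric])
  ultimately show ?thesis
    using pi_inner_commute[of \<pi> g "markov_op P g"]
    by (simp add: a_def dirichlet_form_def pi_inner_diff_left pi_inner_diff_right)
qed

section \<open>Efficiency ordering\<close>

lemma dirichlet_le_imp_efficiency_dominates:
  assumes "prob_dist \<pi>"
    and P: "transition_matrix P" "reversible \<pi> P" "dirichlet_nondegenerate \<pi> P"
    and P': "transition_matrix P'" "reversible \<pi> P'" "dirichlet_nondegenerate \<pi> P'"
    and le: "\<And>h. dirichlet_form \<pi> P h \<le> dirichlet_form \<pi> P' h"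
  shows "efficiency_dominates \<pi> P' P"
  unfolding efficiency_dominates_def
proof
  fix f :: "'a \<Rightarrow> real"
  define f0 where "f0 x = f x - (\<Sum>x\<in>UNIV. \<pi> x * f x)" for x
  obtain g where g: "\<And>x. g x - markov_op P g x = f0 x"
    using poisson_equation_solvable[OF assms(1) P sum_pi_centred[OF assms(1), of f]]
    unfolding f0_def by blast
  obtain g' where g': "\<And>x. g' x - markov_op P' g' x = f0 x"
    using poisson_equation_solvable[OF assms(1) P' sum_pi_centred[OF assms(1), of f]]
    unfolding f0_def by blast
  have "dirichlet_form \<pi> P' g' = pi_inner \<pi> f0 g'"
    by (simp add: dirichlet_form_def g' pi_inner_commute)
  moreover have "2 * pi_inner \<pi> f0 g' - dirichlet_form \<pi> P g' \<le> dirichlet_form \<pi> P g"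
    using dirichlet_form_variational[OF P(1,2) prob_dist_nonneg[OF assms(1)], of g g'] by (simp add: g)
  ultimately have "dirichlet_form \<pi> P' g' \<le> dirichlet_form \<pi> P g"
    using le[of g'] by linarith
  then show "asym_var \<pi> P' f \<le> asym_var \<pi> P f"
    using asym_var_poisson[OF assms(1) P(1,2), of g] asym_var_poisson[OF assms(1) P'(1,2), of g']
    by (simp add: g g' f0_def)
qed

text \<open>Testing dominance on \<open>f = h - P h\<close>, whose Poisson solution for \<open>P\<close> is \<open>h\<close> itself.\<close>

lemma efficiency_dominates_imp_dirichlet_le:
  assumes "prob_dist \<pi>"
    and P: "transition_matrix P" "reversible \<pi> P"
    and P': "transition_matrix P'" "reversible \<pi> P'" "dirichlet_nondegenerate \<pi> P'"
    and dom: "efficiency_dominates \<pi> P' P"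
  shows "dirichlet_form \<pi> P h \<le> dirichlet_form \<pi> P' h"
proof -
  define f where "f = (\<lambda>x. h x - markov_op P h x)"
  have mean_f: "(\<Sum>x\<in>UNIV. \<pi> x * f x) = 0"
    using sum_pi_markov_op[OF P, of h] by (simp add: f_def right_diff_distrib sum_subtractf)
  obtain g' where g': "\<And>x. g' x - markov_op P' g' x = f x"
    using poisson_equation_solvable[OF assms(1) P' mean_f] by blast
  have "dirichlet_form \<pi> P h = pi_inner \<pi> f h"
    unfolding dirichlet_form_def f_def by (rule pi_inner_commute)
  then have "2 * dirichlet_form \<pi> P h - dirichlet_form \<pi> P' h = 2 * pi_inner \<pi> f h - dirichlet_form \<pi> P' h"
    by simp
  also have "\<dots> \<le> dirichlet_form \<pi> P' g'"
    using dirichlet_form_variational[OF P'(1,2) prob_dist_nonneg[OF assms(1)], of g' h] by (simp add: g')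
  also have "\<dots> \<le> dirichlet_form \<pi> P h"
  proof -
    have "\<And>x. h x - markov_op P h x = f x - (\<Sum>x\<in>UNIV. \<pi> x * f x)"
      "\<And>x. g' x - markov_op P' g' x = f x - (\<Sum>x\<in>UNIV. \<pi> x * f x)"
      unfolding mean_f by (simp_all add: f_def g')
    then have "asym_var \<pi> P f = 2 * dirichlet_form \<pi> P h - pi_inner \<pi> f f"
      "asym_var \<pi> P' f = 2 * dirichlet_form \<pi> P' g' - pi_inner \<pi> f f"
      using asym_var_poisson[OF assms(1) P, of h f] asym_var_poisson[OF assms(1) P'(1,2), of g' f]
      by (simp_all add: g' flip: f_def)
    moreover have "asym_var \<pi> P' f \<le> asym_var \<pi> P f"
      using dom by (simp add: efficiency_dominates_def)
    ultimately show ?thesis by simp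
  qed
  finally show ?thesis by simp
qed

lemma efficiency_dominates_iff_dirichlet_le:
  assumes "prob_dist \<pi>"
    and "transition_matrix P" "reversible \<pi> P" "dirichlet_nondegenerate \<pi> P"
    and "transition_matrix P'" "reversible \<pi> P'" "dirichlet_nondegenerate \<pi> P'"
  shows "efficiency_dominates \<pi> P' P \<longleftrightarrow> (\<forall>h. dirichlet_form \<pi> P h \<le> dirichlet_form \<pi> P' h)"
  using dirichlet_le_imp_efficiency_dominates[OF assms] efficiency_dominates_imp_dirichlet_le[OF assms(1-3,5-7)]
  by blast

theorem theorem4:
  fixes \<pi> :: "'a::finite \<Rightarrow> real"
    and P P' Q :: "'a \<Rightarrow> 'a \<Rightarrow> real"
    and a :: real
  assumes "prob_dist \<pi>"
    and "transition_matrix P" and "transition_matrix P'" and "transition_matrix Q"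
    and "reversible \<pi> P" and "reversible \<pi> P'" and "reversible \<pi> Q"
    and "irreducible_chain P" and "irreducible_chain P'"
    and "0 < a" and "a < 1"
  shows "efficiency_dominates \<pi> P' P \<longleftrightarrow>
         efficiency_dominates \<pi> (\<lambda>x y. a * P' x y + (1 - a) * Q x y)
                                 (\<lambda>x y. a * P x y + (1 - a) * Q x y)"
proof -
  note nonneg = prob_dist_nonneg[OF assms(1)]
  have nondeg: "dirichlet_nondegenerate \<pi> P" "dirichlet_nondegenerate \<pi> P'"
    using irreducible_imp_dirichlet_nondegenerate prob_dist_pos assms by blast+
  have mix_nondeg:
    "dirichlet_nondegenerate \<pi> (\<lambda>x y. a * P x y + (1 - a) * Q x y)"
    "dirichlet_nondegenerate \<pi> (\<lambda>x y. a * P' x y + (1 - a) * Q x y)"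
    using dirichlet_nondegenerate_mixture[OF assms(2,5,4,7) nonneg nondeg(1) assms(10)]
      dirichlet_nondegenerate_mixture[OF assms(3,6,4,7) nonneg nondeg(2) assms(10)] assms(11)
    by simp_all
  have "efficiency_dominates \<pi> P' P \<longleftrightarrow> (\<forall>h. dirichlet_form \<pi> P h \<le> dirichlet_form \<pi> P' h)"
    using efficiency_dominates_iff_dirichlet_le assms nondeg by blast
  also have "\<dots> \<longleftrightarrow> (\<forall>h. a * dirichlet_form \<pi> P h + (1 - a) * dirichlet_form \<pi> Q h
      \<le> a * dirichlet_form \<pi> P' h + (1 - a) * dirichlet_form \<pi> Q h)"
    using assms(10) by simp
  also have "\<dots> \<longleftrightarrow> efficiency_dominates \<pi> (\<lambda>x y. a * P' x y + (1 - a) * Q x y)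
                                 (\<lambda>x y. a * P x y + (1 - a) * Q x y)"
    using assms mix_nondeg
    by (simp add: efficiency_dominates_iff_dirichlet_le transition_matrix_mixture reversible_mixture
        dirichlet_form_mixture)
  finally show ?thesis .
qed

end
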